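(* Let $\langle W,\varphi,(Y,\mathbb S,\sigma)\rangle$ be a monotone one-dimensional cocycle with skew-product system $(X,\mathbb S_+,\pi)$, $h=\mathrm{pr}_2$, and let $\tau\in\mathbb S_+$, $\tau>0$. Assume: (1) the discretization with step $\tau$ is strictly monotone, i.e. $u_1<u_2$ implies $\varphi(k\tau,u_1,y)<\varphi(k\tau,u_2,y)$ for all $k\in\mathbb N$, $y\in Y$; (2) $x_0\in X$ has precompact semi-trajectory $\{\pi(t,x_0):t\in\mathbb S_+\}$; (3) $y_0:=h(x_0)$ is asymptotically $\tau$-periodic. Let $q:=\lim_{k\to\infty}\sigma(k\tau,y_0)$, $X_q=h^{-1}(q)$, $\tilde\omega_{x_0}:=\omega_{x_0}\cap X_q$ and $P:=\pi(\tau,\cdot)$. Then: (i) $\omega_{x_0}$ is nonempty, compact and invariant ($\pi(t,\omega_{x_0})=\omega_{x_0}$ for $t\in\mathbb S_+$); (ii) $h(\omega_{x_0})=\omega_{y_0}$; (iii) $P(\tilde\omega_{x_0})=\tilde\omega_{x_0}$; (iv) every point of $\tilde\omega_{x_0}$ is $\tau$-periodic, i.e. $P(x)=x$ for all $x\in\tilde\omega_{x_0}$.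
   Context: $\mathbb S=\mathbb R$ or $\mathbb Z$, $\mathbb S_+=\{t\in\mathbb S:t\ge0\}$. $(Y,\mathbb S,\sigma)$ is a two-sided dynamical system on a complete metric space $Y$; $y$ is $\tau$-periodic if $\sigma(\tau,y)=y$, and $y_0$ is asymptotically $\tau$-periodic if there is a $\tau$-periodic $q$ with $\rho(\sigma(t,y_0),\sigma(t,q))\to0$ as $t\to+\infty$ (then $q=\lim_k\sigma(k\tau,y_0)$). $W\subseteq\mathbb R$ is an interval. A cocycle over $\sigma$ with fibre $W$ is a continuous $\varphi:\mathbb S_+\times W\times Y\to W$ with $\varphi(0,u,y)=u$, $\varphi(t+s,u,y)=\varphi(t,\varphi(s,u,y),\sigma(s,y))$; monotone means $u_1\le u_2\Rightarrow\varphi(t,u_1,y)\le\varphi(t,u_2,y)$. Skew-product: $X=W\times Y$, $\pi(t,(u,y))=(\varphi(t,u,y),\sigma(t,y))$, $h(u,y)=y$. $\omega_x$ ($\omega_y$) is the set of limits of $\pi(t_k,x)$ ($\sigma(t_k,y)$) with $t_k\to+\infty$, $t_k\in\mathbb S_+$. A point $x\in X$ is $\tau$-periodic if $\pi(\tau,x)=x$. *)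

theory Defs
  imports "HOL-Analysis.Analysis"
begin

definition time_set :: "real set \<Rightarrow> bool" where
  "time_set S \<longleftrightarrow> S = UNIV \<or> S = \<int>"

definition nonneg_times :: "real set \<Rightarrow> real set" where
  "nonneg_times S = {t \<in> S. t \<ge> 0}"

definition dyn_system :: "real set \<Rightarrow> (real \<Rightarrow> 'y::metric_space \<Rightarrow> 'y) \<Rightarrow> bool" where
  "dyn_system S \<sigma> \<longleftrightarrow>
     (\<forall>y. \<sigma> 0 y = y) \<and>
     (\<forall>t\<in>S. \<forall>s\<in>S. \<forall>y. \<sigma> (t + s) y = \<sigma> t (\<sigma> s y)) \<and>
     continuous_on (S \<times> UNIV) (\<lambda>(t, y). \<sigma> t y)"

definition cocycle :: "real set \<Rightarrow> real set \<Rightarrow> (real \<Rightarrow> 'y::metric_space \<Rightarrow> 'y)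
    \<Rightarrow> (real \<Rightarrow> real \<Rightarrow> 'y \<Rightarrow> real) \<Rightarrow> bool" where
  "cocycle S W \<sigma> phi \<longleftrightarrow>
     (\<forall>t\<in>nonneg_times S. \<forall>u\<in>W. \<forall>y. phi t u y \<in> W) \<and>
     continuous_on (nonneg_times S \<times> W \<times> UNIV) (\<lambda>(t, u, y). phi t u y) \<and>
     (\<forall>u\<in>W. \<forall>y. phi 0 u y = u) \<and>
     (\<forall>t\<in>nonneg_times S. \<forall>s\<in>nonneg_times S. \<forall>u\<in>W. \<forall>y.
        phi (t + s) u y = phi t (phi s u y) (\<sigma> s y))"

definition monotone_cocycle :: "real set \<Rightarrow> real set \<Rightarrow> (real \<Rightarrow> real \<Rightarrow> 'y \<Rightarrow> real) \<Rightarrow> bool" where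
  "monotone_cocycle S W phi \<longleftrightarrow>
     (\<forall>t\<in>nonneg_times S. \<forall>u1\<in>W. \<forall>u2\<in>W. \<forall>y. u1 \<le> u2 \<longrightarrow> phi t u1 y \<le> phi t u2 y)"

definition skew_product :: "(real \<Rightarrow> 'y \<Rightarrow> 'y) \<Rightarrow> (real \<Rightarrow> real \<Rightarrow> 'y \<Rightarrow> real)
    \<Rightarrow> real \<Rightarrow> real \<times> 'y \<Rightarrow> real \<times> 'y" where
  "skew_product \<sigma> phi t x = (phi t (fst x) (snd x), \<sigma> t (snd x))"

definition omega_limit :: "real set \<Rightarrow> (real \<Rightarrow> 'a::topological_space \<Rightarrow> 'a) \<Rightarrow> 'a \<Rightarrow> 'a set" where
  "omega_limit S f x = {p. \<exists>tk::nat \<Rightarrow> real. (\<forall>k. tk k \<in> nonneg_times S) \<and>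
      filterlim tk at_top sequentially \<and> (\<lambda>k. f (tk k) x) \<longlonglongrightarrow> p}"

text \<open>Precompactness of a subset A of the space X (closure in X compact):
  A is contained in a compact subset of X.\<close>
definition precompact_in :: "'a::metric_space set \<Rightarrow> 'a set \<Rightarrow> bool" where
  "precompact_in X A \<longleftrightarrow> (\<exists>K. compact K \<and> K \<subseteq> X \<and> A \<subseteq> K)"

definition asympt_periodic :: "real set \<Rightarrow> (real \<Rightarrow> 'y::metric_space \<Rightarrow> 'y) \<Rightarrow> real \<Rightarrow> 'y \<Rightarrow> bool" where
  "asympt_periodic S \<sigma> tau y0 \<longleftrightarrow>
     (\<exists>q. \<sigma> tau q = q \<and>
        (\<forall>e>0. \<exists>T. \<forall>t\<in>nonneg_times S. t \<ge> T \<longrightarrow> dist (\<sigma> t y0) (\<sigma> t q) < e))"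

end

theory Submission
  imports Defs
begin

text \<open>Sampling the semiflow at multiples of \<open>\<tau>\<close>, every point of \<open>\<omega>(x\<^sub>0)\<close> has the form
  \<open>\<pi>(s, x')\<close> with \<open>x'\<close> a limit of \<open>P\<^sup>n x\<^sub>0\<close> along a subsequence.  Such an \<open>x'\<close> lies over
  the \<open>\<tau>\<close>-periodic point \<open>q\<close>, and its first coordinate is a cluster point of the scalar
  recursion \<open>u\<^sub>n\<^sub>+\<^sub>1 = \<phi>(\<tau>, u\<^sub>n, \<sigma>(n\<tau>, y\<^sub>0))\<close>, whose monotone maps converge to
  \<open>\<phi>(\<tau>, \<cdot>, q)\<close>.  In dimension one, monotonicity traps the orbit on one side of any point that
  the limit map moves, so cluster points are fixed by \<open>\<phi>(\<tau>, \<cdot>, q)\<close>; hence \<open>P x' = x'\<close>, and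
  then \<open>P x = \<pi>(s, P x') = x\<close>.\<close>

section \<open>Time sets and omega-limit sets\<close>

lemma closed_nonneg_times: "time_set S \<Longrightarrow> closed (nonneg_times S)"
proof -
  assume "time_set S"
  then have "closed S"
    unfolding time_set_def by auto
  moreover have "nonneg_times S = S \<inter> {0..}"
    unfolding nonneg_times_def by auto
  ultimately show ?thesis
    by (simp add: closed_Int)
qed

lemma nonneg_times_add:
  "time_set S \<Longrightarrow> t \<in> nonneg_times S \<Longrightarrow> s \<in> nonneg_times S \<Longrightarrow> t + s \<in> nonneg_times S"
  unfolding time_set_def nonneg_times_def by auto

lemma nonneg_times_diff:
  "time_set S \<Longrightarrow> t \<in> nonneg_times S \<Longrightarrow> s \<in> nonneg_times S \<Longrightarrow> s \<le> t \<Longrightarrow> t - s \<in> nonneg_times S"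
  unfolding time_set_def nonneg_times_def by auto

lemma of_nat_mult_nonneg_times:
  "time_set S \<Longrightarrow> t \<in> nonneg_times S \<Longrightarrow> real n * t \<in> nonneg_times S"
  unfolding time_set_def nonneg_times_def by (auto intro: Ints_mult)

lemma of_nat_nonneg_times: "time_set S \<Longrightarrow> real n \<in> nonneg_times S"
  unfolding time_set_def nonneg_times_def by auto

lemma nonneg_times_floor_remainder:
  assumes S: "time_set S" and tau: "tau \<in> nonneg_times S" "tau > 0" and t: "t \<in> nonneg_times S"
  shows "t - real (nat \<lfloor>t / tau\<rfloor>) * tau \<in> nonneg_times S \<inter> {0..tau}"
proof -
  have "real (nat \<lfloor>t / tau\<rfloor>) = of_int \<lfloor>t / tau\<rfloor>"
    using t tau(2) by (simp add: nonneg_times_def)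
  then have "real (nat \<lfloor>t / tau\<rfloor>) * tau \<le> t" "t < real (nat \<lfloor>t / tau\<rfloor>) * tau + tau"
    using floor_divide_lower[OF tau(2), of t] floor_divide_upper[OF tau(2), of t]
    by (simp_all add: algebra_simps)
  then show ?thesis
    using nonneg_times_diff[OF S t of_nat_mult_nonneg_times[OF S tau(1)]] by auto
qed

lemma filterlim_nat_floor_divide:
  fixes tk :: "'a \<Rightarrow> real"
  assumes "tau > 0" "filterlim tk at_top F"
  shows "filterlim (\<lambda>k. nat \<lfloor>tk k / tau\<rfloor>) sequentially F"
proof -
  have "filterlim (\<lambda>k. inverse tau * tk k) at_top F"
    using assms by (intro filterlim_tendsto_pos_mult_at_top[OF tendsto_const]) simp_all
  then show ?thesis
    by (intro filterlim_compose[OF filterlim_nat_sequentially]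
        filterlim_compose[OF filterlim_floor_sequentially]) (simp add: field_simps)
qed

lemma omega_limit_iff:
  fixes f :: "real \<Rightarrow> 'a::metric_space \<Rightarrow> 'a"
  shows "p \<in> omega_limit S f x \<longleftrightarrow>
    (\<forall>e>0. \<forall>T. \<exists>t\<in>nonneg_times S. T \<le> t \<and> dist (f t x) p < e)"
proof
  assume "p \<in> omega_limit S f x"
  then obtain tk where tk: "\<And>k. tk k \<in> nonneg_times S" "filterlim tk at_top sequentially"
    "(\<lambda>k. f (tk k) x) \<longlonglongrightarrow> p" unfolding omega_limit_def by auto
  show "\<forall>e>0. \<forall>T. \<exists>t\<in>nonneg_times S. T \<le> t \<and> dist (f t x) p < e"
  proof (intro allI impI)
    fix e :: real and T assume "e > 0"
    have "\<forall>\<^sub>F k in sequentially. T \<le> tk k"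
      using tk(2) unfolding filterlim_at_top by blast
    then have "\<forall>\<^sub>F k in sequentially. T \<le> tk k \<and> dist (f (tk k) x) p < e"
      using tendstoD[OF tk(3) \<open>e > 0\<close>] by (rule eventually_conj)
    then show "\<exists>t\<in>nonneg_times S. T \<le> t \<and> dist (f t x) p < e"
      using tk(1) unfolding eventually_sequentially by blast
  qed
next
  assume "\<forall>e>0. \<forall>T. \<exists>t\<in>nonneg_times S. T \<le> t \<and> dist (f t x) p < e"
  then have "\<forall>k. \<exists>t. t \<in> nonneg_times S \<and> real k \<le> t \<and> dist (f t x) p < inverse (real (Suc k))"
    by (meson inverse_positive_iff_positive of_nat_0_less_iff zero_less_Suc)
  from choice[OF this] obtain tk where tk: "\<And>k. tk k \<in> nonneg_times S" "\<And>k. real k \<le> tk k"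
      "\<And>k. dist (f (tk k) x) p < inverse (real (Suc k))"
    by blast
  have "\<forall>\<^sub>F k in sequentially. real k \<le> tk k"
    using tk(2) by simp
  then have "filterlim tk at_top sequentially"
    by (rule filterlim_at_top_mono[OF filterlim_real_sequentially])
  moreover have "(\<lambda>k. f (tk k) x) \<longlonglongrightarrow> p"
  proof (rule tendsto_dist_iff[THEN iffD2],
      rule tendsto_sandwich[OF _ _ tendsto_const LIMSEQ_inverse_real_of_nat])
    show "\<forall>\<^sub>F k in sequentially. 0 \<le> dist (f (tk k) x) p"
      by simp
    show "\<forall>\<^sub>F k in sequentially. dist (f (tk k) x) p \<le> inverse (real (Suc k))"
      using tk(3) by (simp add: less_imp_le)
  qed
  ultimately show "p \<in> omega_limit S f x"
    unfolding omega_limit_def using tk(1) by blast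
qed

lemma closed_omega_limit:
  fixes f :: "real \<Rightarrow> 'a::metric_space \<Rightarrow> 'a"
  shows "closed (omega_limit S f x)"
proof (rule iffD1[OF closure_subset_eq], rule subsetI)
  fix p assume "p \<in> closure (omega_limit S f x)"
  then have near: "\<forall>e>0. \<exists>p'\<in>omega_limit S f x. dist p' p < e"
    by (simp add: closure_approachable)
  show "p \<in> omega_limit S f x"
    unfolding omega_limit_iff
  proof (intro allI impI)
    fix e :: real and T assume "e > 0"
    then have "e/2 > 0"
      by simp
    then obtain p' where p': "p' \<in> omega_limit S f x" "dist p' p < e/2"
      using near by blast
    then obtain t where t: "t \<in> nonneg_times S" "T \<le> t" "dist (f t x) p' < e/2"
      using \<open>e/2 > 0\<close> unfolding omega_limit_iff by blast
    have "dist (f t x) p < e"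
      using dist_triangle[of "f t x" p p'] t(3) p'(2) by linarith
    then show "\<exists>t\<in>nonneg_times S. T \<le> t \<and> dist (f t x) p < e"
      using t(1,2) by blast
  qed
qed

lemma omega_limit_subset:
  fixes f :: "real \<Rightarrow> 'a::metric_space \<Rightarrow> 'a"
  assumes "closed K" and orbit: "\<And>t. t \<in> nonneg_times S \<Longrightarrow> f t x \<in> K"
  shows "omega_limit S f x \<subseteq> K"
proof
  fix p assume "p \<in> omega_limit S f x"
  then obtain tk where tk: "\<And>k. tk k \<in> nonneg_times S" "(\<lambda>k. f (tk k) x) \<longlonglongrightarrow> p"
    unfolding omega_limit_def by blast
  show "p \<in> K"
    by (rule closed_sequentially[OF \<open>closed K\<close> orbit[OF tk(1)] tk(2)])
qed

lemma omega_limit_subsequence: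
  fixes f :: "real \<Rightarrow> 'a::metric_space \<Rightarrow> 'a"
  assumes "compact K" and orbit: "\<And>t. t \<in> nonneg_times S \<Longrightarrow> f t x \<in> K"
    and tk: "\<And>k. tk k \<in> nonneg_times S" "filterlim tk at_top sequentially"
  obtains r p where "strict_mono r" "p \<in> omega_limit S f x"
    "(\<lambda>k. f (tk (r k)) x) \<longlonglongrightarrow> p"
proof -
  have "\<forall>k. f (tk k) x \<in> K"
    using orbit[OF tk(1)] by simp
  then obtain p r where r: "strict_mono r" "((\<lambda>k. f (tk k) x) \<circ> r) \<longlonglongrightarrow> p"
    by (rule seq_compactE[OF compact_imp_seq_compact[OF \<open>compact K\<close>]])
  then have lim: "(\<lambda>k. f (tk (r k)) x) \<longlonglongrightarrow> p"
    by (simp add: comp_def)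
  have "filterlim (\<lambda>k. tk (r k)) at_top sequentially"
    by (rule filterlim_compose[OF tk(2) filterlim_subseq[OF r(1)]])
  then have "p \<in> omega_limit S f x"
    using lim tk(1) unfolding omega_limit_def by (intro CollectI exI[of _ "\<lambda>k. tk (r k)"]) simp
  then show thesis
    using that r(1) lim by blast
qed

lemma omega_limit_nonempty:
  fixes f :: "real \<Rightarrow> 'a::metric_space \<Rightarrow> 'a"
  assumes "time_set S" "compact K" "\<And>t. t \<in> nonneg_times S \<Longrightarrow> f t x \<in> K"
  shows "omega_limit S f x \<noteq> {}"
proof -
  obtain r :: "nat \<Rightarrow> nat" and p where "p \<in> omega_limit S f x"
    by (rule omega_limit_subsequence[where f = f and x = x, OF assms(2,3)
          of_nat_nonneg_times[OF assms(1)] filterlim_real_sequentially])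
  then show ?thesis
    by blast
qed

lemma compact_omega_limit:
  fixes f :: "real \<Rightarrow> 'a::metric_space \<Rightarrow> 'a"
  assumes "compact K" "\<And>t. t \<in> nonneg_times S \<Longrightarrow> f t x \<in> K"
  shows "compact (omega_limit S f x)"
proof -
  have "omega_limit S f x \<subseteq> K"
    by (rule omega_limit_subset[where f = f and x = x, OF compact_imp_closed[OF assms(1)] assms(2)])
  then show ?thesis
    using compact_Int_closed[OF assms(1) closed_omega_limit, of S f x] by (simp add: Int_absorb1)
qed

lemma image_omega_limit:
  fixes f :: "real \<Rightarrow> 'a::metric_space \<Rightarrow> 'a" and g :: "real \<Rightarrow> 'b::metric_space \<Rightarrow> 'b"
  assumes K: "compact K" and orbit: "\<And>t. t \<in> nonneg_times S \<Longrightarrow> f t x \<in> K"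
    and h: "continuous_on K h"
    and semiconj: "\<And>t. t \<in> nonneg_times S \<Longrightarrow> h (f t x) = g t (h x)"
  shows "h ` omega_limit S f x = omega_limit S g (h x)"
proof
  have lim_h: "(\<lambda>k. g (tk k) (h x)) \<longlonglongrightarrow> h p"
    if "\<And>k. tk k \<in> nonneg_times S" "(\<lambda>k. f (tk k) x) \<longlonglongrightarrow> p" "p \<in> omega_limit S f x"
    for tk p
  proof -
    have "p \<in> K"
      using omega_limit_subset[where f = f and x = x, OF compact_imp_closed[OF K] orbit] that(3) by blast
    moreover have "\<forall>\<^sub>F k in sequentially. f (tk k) x \<in> K"
      using orbit that(1) by simp
    ultimately have "(\<lambda>k. h (f (tk k) x)) \<longlonglongrightarrow> h p"
      by (rule continuous_on_tendsto_compose[OF h that(2)])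
    then show ?thesis
      using semiconj that(1) by simp
  qed
  show "h ` omega_limit S f x \<subseteq> omega_limit S g (h x)"
  proof
    fix y assume "y \<in> h ` omega_limit S f x"
    then obtain p tk where p: "y = h p" "p \<in> omega_limit S f x"
      and tk: "\<And>k. tk k \<in> nonneg_times S" "filterlim tk at_top sequentially"
        "(\<lambda>k. f (tk k) x) \<longlonglongrightarrow> p"
      unfolding omega_limit_def by blast
    then show "y \<in> omega_limit S g (h x)"
      using lim_h[OF tk(1,3) p(2)] unfolding omega_limit_def by blast
  qed
  show "omega_limit S g (h x) \<subseteq> h ` omega_limit S f x"
  proof
    fix y assume "y \<in> omega_limit S g (h x)"
    then obtain tk where tk: "\<And>k. tk k \<in> nonneg_times S" "filterlim tk at_top sequentially"
        "(\<lambda>k. g (tk k) (h x)) \<longlonglongrightarrow> y"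
      unfolding omega_limit_def by blast
    obtain r p where r: "strict_mono r" "p \<in> omega_limit S f x"
        "(\<lambda>k. f (tk (r k)) x) \<longlonglongrightarrow> p"
      using omega_limit_subsequence[where f = f and x = x, OF K orbit tk(1,2)] .
    have "(\<lambda>k. g (tk (r k)) (h x)) \<longlonglongrightarrow> y"
      using LIMSEQ_subseq_LIMSEQ[OF tk(3) r(1)] by (simp add: comp_def)
    moreover have "(\<lambda>k. g (tk (r k)) (h x)) \<longlonglongrightarrow> h p"
      using lim_h[OF _ r(3,2)] tk(1) r(1) by simp
    ultimately have "y = h p"
      by (rule LIMSEQ_unique)
    then show "y \<in> h ` omega_limit S f x"
      using r(2) by blast
  qed
qed

section \<open>Semiflows\<close>

locale semiflow =
  fixes S :: "real set" and X :: "'a::metric_space set" and \<pi> :: "real \<Rightarrow> 'a \<Rightarrow> 'a"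
  assumes time_set: "time_set S"
    and semiflow_mem: "t \<in> nonneg_times S \<Longrightarrow> x \<in> X \<Longrightarrow> \<pi> t x \<in> X"
    and semiflow_add: "t \<in> nonneg_times S \<Longrightarrow> s \<in> nonneg_times S \<Longrightarrow> x \<in> X \<Longrightarrow>
      \<pi> (t + s) x = \<pi> t (\<pi> s x)"
    and continuous_on_semiflow: "continuous_on (nonneg_times S \<times> X) (\<lambda>(t, x). \<pi> t x)"
begin

lemma semiflow_tendsto:
  assumes "(\<lambda>k. (ts k, xs k)) \<longlonglongrightarrow> (t, x)" "t \<in> nonneg_times S" "x \<in> X"
    "\<And>k. ts k \<in> nonneg_times S" "\<And>k. xs k \<in> X"
  shows "(\<lambda>k. \<pi> (ts k) (xs k)) \<longlonglongrightarrow> \<pi> t x"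
proof -
  have "(\<lambda>k. (\<lambda>(t, x). \<pi> t x) (ts k, xs k)) \<longlonglongrightarrow> (\<lambda>(t, x). \<pi> t x) (t, x)"
    by (rule continuous_on_tendsto_compose[OF continuous_on_semiflow assms(1)])
      (use assms(2-5) in auto)
  then show ?thesis
    by simp
qed

lemma omega_limit_invariant:
  assumes x0: "x0 \<in> X" and K: "compact K" "K \<subseteq> X"
    and orbit: "\<And>t. t \<in> nonneg_times S \<Longrightarrow> \<pi> t x0 \<in> K"
    and t: "t \<in> nonneg_times S"
  shows "\<pi> t ` omega_limit S \<pi> x0 = omega_limit S \<pi> x0"
proof
  have omega_X: "omega_limit S \<pi> x0 \<subseteq> X"
    using omega_limit_subset[where f = \<pi> and x = x0, OF compact_imp_closed[OF K(1)] orbit] K(2) by blast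
  have shift: "(\<lambda>k. \<pi> t (\<pi> (sk k) x0)) \<longlonglongrightarrow> \<pi> t p"
    if "\<And>k. sk k \<in> nonneg_times S" "(\<lambda>k. \<pi> (sk k) x0) \<longlonglongrightarrow> p" "p \<in> omega_limit S \<pi> x0"
    for sk p
    using that omega_X by (intro semiflow_tendsto tendsto_Pair tendsto_const t semiflow_mem x0) auto
  show "\<pi> t ` omega_limit S \<pi> x0 \<subseteq> omega_limit S \<pi> x0"
  proof
    fix z assume "z \<in> \<pi> t ` omega_limit S \<pi> x0"
    then obtain p tk where p: "z = \<pi> t p" "p \<in> omega_limit S \<pi> x0"
      and tk: "\<And>k. tk k \<in> nonneg_times S" "filterlim tk at_top sequentially"
        "(\<lambda>k. \<pi> (tk k) x0) \<longlonglongrightarrow> p"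
      unfolding omega_limit_def by blast
    have "(\<lambda>k. \<pi> (t + tk k) x0) \<longlonglongrightarrow> z"
      using shift[OF tk(1,3) p(2)] semiflow_add[OF t tk(1) x0] p(1) by simp
    moreover have "filterlim (\<lambda>k. t + tk k) at_top sequentially"
      by (rule filterlim_tendsto_add_at_top[OF tendsto_const tk(2)])
    ultimately show "z \<in> omega_limit S \<pi> x0"
      using nonneg_times_add[OF time_set t tk(1)] unfolding omega_limit_def
      by (intro CollectI exI[of _ "\<lambda>k. t + tk k"]) simp
  qed
  show "omega_limit S \<pi> x0 \<subseteq> \<pi> t ` omega_limit S \<pi> x0"
  proof
    fix p assume "p \<in> omega_limit S \<pi> x0"
    then obtain tk where tk: "\<And>k. tk k \<in> nonneg_times S" "filterlim tk at_top sequentially"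
        "(\<lambda>k. \<pi> (tk k) x0) \<longlonglongrightarrow> p"
      unfolding omega_limit_def by blast
    obtain N where N: "\<And>k. N \<le> k \<Longrightarrow> t \<le> tk k"
      using tk(2) unfolding filterlim_at_top eventually_sequentially by blast
    define sk where "sk k = tk (k + N) - t" for k
    have sk: "sk k \<in> nonneg_times S" for k
      unfolding sk_def by (rule nonneg_times_diff[OF time_set tk(1) t N]) simp
    have "filterlim (\<lambda>k. tk (k + N)) at_top sequentially"
      by (rule filterlim_compose[OF tk(2) filterlim_add_const_nat_at_top])
    then have "filterlim (\<lambda>k. - t + tk (k + N)) at_top sequentially"
      by (rule filterlim_tendsto_add_at_top[OF tendsto_const])
    moreover have "(\<lambda>k. - t + tk (k + N)) = sk"
      by (simp add: sk_def fun_eq_iff)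
    ultimately have sk_lim: "filterlim sk at_top sequentially"
      by simp
    obtain r p' where r: "strict_mono r" "p' \<in> omega_limit S \<pi> x0"
        "(\<lambda>k. \<pi> (sk (r k)) x0) \<longlonglongrightarrow> p'"
      using omega_limit_subsequence[where f = \<pi> and x = x0, OF K(1) orbit sk sk_lim] .
    have "(\<lambda>k. \<pi> (tk (r k + N)) x0) \<longlonglongrightarrow> \<pi> t p'"
      using shift[OF sk r(3,2)] semiflow_add[OF t sk x0] by (simp add: sk_def)
    moreover have "strict_mono (\<lambda>k. r k + N)"
      using r(1) by (simp add: strict_mono_def)
    then have "(\<lambda>k. \<pi> (tk (r k + N)) x0) \<longlonglongrightarrow> p"
      using LIMSEQ_subseq_LIMSEQ[OF tk(3)] by (simp add: comp_def)
    ultimately have "p = \<pi> t p'"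
      using LIMSEQ_unique by blast
    then show "p \<in> \<pi> t ` omega_limit S \<pi> x0"
      using r(2) by blast
  qed
qed

lemma omega_limit_sampled:
  assumes x0: "x0 \<in> X" and K: "compact K" "K \<subseteq> X"
    and orbit: "\<And>t. t \<in> nonneg_times S \<Longrightarrow> \<pi> t x0 \<in> K"
    and tau: "tau \<in> nonneg_times S" "tau > 0"
    and x: "x \<in> omega_limit S \<pi> x0"
  obtains s x' nk where "s \<in> nonneg_times S" "x' \<in> X" "x = \<pi> s x'"
    "filterlim nk sequentially sequentially" "(\<lambda>j. \<pi> (real (nk j) * tau) x0) \<longlonglongrightarrow> x'"
proof -
  obtain tk where tk: "\<And>k. tk k \<in> nonneg_times S" "filterlim tk at_top sequentially"
      "(\<lambda>k. \<pi> (tk k) x0) \<longlonglongrightarrow> x"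
    using x unfolding omega_limit_def by blast
  define nk where "nk k = nat \<lfloor>tk k / tau\<rfloor>" for k
  define sk where "sk k = tk k - real (nk k) * tau" for k
  have nk_tau: "real (nk k) * tau \<in> nonneg_times S" for k
    by (rule of_nat_mult_nonneg_times[OF time_set tau(1)])
  have sk: "sk k \<in> nonneg_times S" "sk k \<in> {0..tau}" for k
    using nonneg_times_floor_remainder[OF time_set tau tk(1)] unfolding sk_def nk_def by auto
  have nk_lim: "filterlim nk sequentially sequentially"
    unfolding nk_def by (rule filterlim_nat_floor_divide[OF tau(2) tk(2)])
  have "compact (({0..tau} \<inter> nonneg_times S) \<times> K)"
    using closed_nonneg_times[OF time_set] K(1) by (intro compact_Times compact_Int_closed compact_Icc)
  moreover have "\<forall>k. (sk k, \<pi> (real (nk k) * tau) x0) \<in> ({0..tau} \<inter> nonneg_times S) \<times> K"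
    using sk orbit[OF nk_tau] by blast
  ultimately obtain l r where l: "l \<in> ({0..tau} \<inter> nonneg_times S) \<times> K" "strict_mono r"
      "((\<lambda>k. (sk k, \<pi> (real (nk k) * tau) x0)) \<circ> r) \<longlonglongrightarrow> l"
    by (rule seq_compactE[OF compact_imp_seq_compact])
  obtain s x' where "l = (s, x')"
    by (cases l)
  with l have r: "strict_mono r" "s \<in> nonneg_times S" "x' \<in> K"
      "(\<lambda>j. (sk (r j), \<pi> (real (nk (r j)) * tau) x0)) \<longlonglongrightarrow> (s, x')"
    by (auto simp: comp_def)
  have "(\<lambda>j. \<pi> (sk (r j)) (\<pi> (real (nk (r j)) * tau) x0)) \<longlonglongrightarrow> \<pi> s x'"
    using r K(2) sk(1) semiflow_mem[OF nk_tau x0] by (intro semiflow_tendsto) auto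
  moreover have "\<pi> (sk k) (\<pi> (real (nk k) * tau) x0) = \<pi> (tk k) x0" for k
    using semiflow_add[OF sk(1) nk_tau x0, of k k] by (simp add: sk_def)
  ultimately have "(\<lambda>j. \<pi> (tk (r j)) x0) \<longlonglongrightarrow> \<pi> s x'"
    by simp
  moreover have "(\<lambda>j. \<pi> (tk (r j)) x0) \<longlonglongrightarrow> x"
    using LIMSEQ_subseq_LIMSEQ[OF tk(3) r(1)] by (simp add: comp_def)
  ultimately have "x = \<pi> s x'"
    using LIMSEQ_unique by blast
  moreover have "filterlim (\<lambda>j. nk (r j)) sequentially sequentially"
    by (rule filterlim_compose[OF nk_lim filterlim_subseq[OF r(1)]])
  moreover have "(\<lambda>j. \<pi> (real (nk (r j)) * tau) x0) \<longlonglongrightarrow> x'"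
    using tendsto_snd[OF r(4)] by simp
  ultimately show thesis
    using that r(2,3) K(2) by blast
qed

lemma omega_limit_periodic:
  assumes x0: "x0 \<in> X" and K: "compact K" "K \<subseteq> X"
    and orbit: "\<And>t. t \<in> nonneg_times S \<Longrightarrow> \<pi> t x0 \<in> K"
    and tau: "tau \<in> nonneg_times S" "tau > 0"
    and sampled_fixed: "\<And>nk x'. filterlim nk sequentially sequentially \<Longrightarrow>
      (\<lambda>j. \<pi> (real (nk j) * tau) x0) \<longlonglongrightarrow> x' \<Longrightarrow> \<pi> tau x' = x'"
    and x: "x \<in> omega_limit S \<pi> x0"
  shows "\<pi> tau x = x"
proof -
  obtain s x' nk where s: "s \<in> nonneg_times S" and x': "x' \<in> X" "x = \<pi> s x'"
    and nk: "filterlim nk sequentially sequentially" "(\<lambda>j. \<pi> (real (nk j) * tau) x0) \<longlonglongrightarrow> x'"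
    by (rule omega_limit_sampled[OF x0 K orbit tau x])
  have "\<pi> tau x = \<pi> (tau + s) x'"
    using semiflow_add[OF tau(1) s x'(1)] x'(2) by simp
  also have "\<dots> = \<pi> s (\<pi> tau x')"
    using semiflow_add[OF s tau(1) x'(1)] by (simp add: add.commute)
  also have "\<dots> = x"
    using sampled_fixed[OF nk] x'(2) by simp
  finally show ?thesis .
qed

end

section \<open>Monotone scalar recursions\<close>

lemma monotone_recursion_stays_above:
  fixes u :: "nat \<Rightarrow> real" and g :: "nat \<Rightarrow> real \<Rightarrow> real"
  assumes u: "\<And>n. u n \<in> W"
    and rec: "\<And>n. u (Suc n) = g n (u n)"
    and mono: "\<And>n a b. a \<in> W \<Longrightarrow> b \<in> W \<Longrightarrow> a \<le> b \<Longrightarrow> g n a \<le> g n b"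
    and a: "a \<in> W" "a \<le> c" and above: "\<And>n. N \<le> n \<Longrightarrow> c < g n a"
    and start: "N \<le> n\<^sub>0" "a \<le> u n\<^sub>0" and n: "n\<^sub>0 < n"
  shows "c < u n"
proof -
  have next_above: "c < u (Suc m)" if "N \<le> m" "a \<le> u m" for m
    using mono[OF a(1) u that(2), of m] above[OF that(1)] rec[of m] by linarith
  have stay: "a \<le> u m" if "n\<^sub>0 \<le> m" for m
    using that
  proof (induction rule: dec_induct)
    case base
    show ?case
      by (rule start(2))
  next
    case (step m)
    then show ?case
      using next_above[of m] start(1) a(2) by simp
  qed
  obtain m where "n = Suc m" "n\<^sub>0 \<le> m"
    using n by (cases n) auto
  then show ?thesis
    using next_above[OF _ stay] start(1) by simp
qed

lemma monotone_recursion_cluster_point_le: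
  fixes u :: "nat \<Rightarrow> real" and g :: "nat \<Rightarrow> real \<Rightarrow> real" and f :: "real \<Rightarrow> real"
  assumes W: "is_interval W" and u: "\<And>n. u n \<in> W"
    and lo: "lo \<in> W" "\<And>n. lo \<le> u n"
    and rec: "\<And>n. u (Suc n) = g n (u n)"
    and mono: "\<And>n a b. a \<in> W \<Longrightarrow> b \<in> W \<Longrightarrow> a \<le> b \<Longrightarrow> g n a \<le> g n b"
    and lim: "\<And>w. w \<in> W \<Longrightarrow> (\<lambda>n. g n w) \<longlonglongrightarrow> f w"
    and cont: "continuous_on W f"
    and v: "v \<in> W"
    and cluster: "\<And>e. e > 0 \<Longrightarrow> \<exists>\<^sub>F n in sequentially. \<bar>u n - v\<bar> < e"
  shows "f v \<le> v"
proof (rule ccontr)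
  assume "\<not> f v \<le> v"
  define e where "e = f v - v"
  have e: "e > 0"
    using \<open>\<not> f v \<le> v\<close> by (simp add: e_def)
  have lo_v: "lo \<le> v"
  proof (rule ccontr)
    assume "\<not> lo \<le> v"
    then obtain n where "\<bar>u n - v\<bar> < lo - v"
      using frequently_ex[OF cluster[of "lo - v"]] by auto
    with lo(2)[of n] show False
      by linarith
  qed
  have "e/2 > 0"
    using e by simp
  then obtain eta where eta: "eta > 0" "\<And>w. w \<in> W \<Longrightarrow> dist w v < eta \<Longrightarrow> dist (f w) (f v) < e/2"
    using cont v unfolding continuous_on_iff by blast
  define a where "a = max (v - eta/2) lo"
  have a: "lo \<le> a" "a \<le> v" "dist a v < eta"
    using lo_v eta(1) unfolding a_def dist_real_def by auto
  then have aW: "a \<in> W"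
    using W lo(1) v unfolding is_interval_1 by blast
  have "\<bar>f a - f v\<bar> < e/2"
    using eta(2)[OF aW a(3)] by (simp add: dist_real_def)
  then have "v + e/4 < f a"
    using e unfolding e_def abs_less_iff by (simp add: field_simps)
  then have "\<forall>\<^sub>F n in sequentially. v + e/4 < g n a"
    by (rule order_tendstoD(1)[OF lim[OF aW]])
  then obtain N where N: "\<And>n. N \<le> n \<Longrightarrow> v + e/4 < g n a"
    unfolding eventually_sequentially by blast
  obtain n\<^sub>0 where n\<^sub>0: "N \<le> n\<^sub>0" "\<bar>u n\<^sub>0 - v\<bar> < eta/2"
    using cluster[of "eta/2"] eta(1) unfolding frequently_sequentially by auto
  then have a_u: "a \<le> u n\<^sub>0"
    using lo(2)[of n\<^sub>0] unfolding a_def by arith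
  have a_below: "a \<le> v + e/4"
    using a(2) e by linarith
  have "\<exists>n\<ge>Suc n\<^sub>0. \<bar>u n - v\<bar> < e/4"
    using cluster[of "e/4"] e unfolding frequently_sequentially by simp
  then obtain n where n: "n\<^sub>0 < n" "\<bar>u n - v\<bar> < e/4"
    by (auto simp: Suc_le_eq)
  have "v + e/4 < u n"
    by (rule monotone_recursion_stays_above[OF u rec mono aW a_below N n\<^sub>0(1) a_u n(1)])
  with n(2) show False
    by linarith
qed

lemma monotone_recursion_cluster_point_fixed:
  fixes u :: "nat \<Rightarrow> real" and g :: "nat \<Rightarrow> real \<Rightarrow> real" and f :: "real \<Rightarrow> real"
  assumes W: "is_interval W" and u: "\<And>n. u n \<in> W"
    and lo: "lo \<in> W" "\<And>n. lo \<le> u n" and hi: "hi \<in> W" "\<And>n. u n \<le> hi"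
    and rec: "\<And>n. u (Suc n) = g n (u n)"
    and mono: "\<And>n a b. a \<in> W \<Longrightarrow> b \<in> W \<Longrightarrow> a \<le> b \<Longrightarrow> g n a \<le> g n b"
    and lim: "\<And>w. w \<in> W \<Longrightarrow> (\<lambda>n. g n w) \<longlonglongrightarrow> f w"
    and cont: "continuous_on W f"
    and v: "v \<in> W"
    and cluster: "\<And>e. e > 0 \<Longrightarrow> \<exists>\<^sub>F n in sequentially. \<bar>u n - v\<bar> < e"
  shows "f v = v"
proof (rule antisym)
  show "f v \<le> v"
    by (rule monotone_recursion_cluster_point_le[OF W u lo rec mono lim cont v cluster])
  have "- f (- (- v)) \<le> - v"
  proof (rule monotone_recursion_cluster_point_le[where u = "\<lambda>n. - u n"
        and g = "\<lambda>n w. - g n (- w)" and W = "uminus ` W" and lo = "- hi"])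
    show "continuous_on (uminus ` W) (\<lambda>w. - f (- w))"
      by (intro continuous_intros continuous_on_compose2[OF cont]) auto
    show "(\<lambda>n. - g n (- w)) \<longlonglongrightarrow> - f (- w)" if "w \<in> uminus ` W" for w
      using that by (auto intro!: tendsto_minus lim)
  qed (use W u hi rec mono cluster v in \<open>auto simp: abs_minus_commute intro: mono\<close>)
  then show "v \<le> f v"
    by simp
qed

section \<open>Skew-product semiflows of monotone cocycles\<close>

lemma frequently_dist_less_of_reindexed_limit:
  fixes a :: "nat \<Rightarrow> 'a::metric_space"
  assumes nk: "filterlim nk sequentially sequentially" and lim: "(\<lambda>j. a (nk j)) \<longlonglongrightarrow> l"
    and e: "e > 0"
  shows "\<exists>\<^sub>F n in sequentially. dist (a n) l < e"
  unfolding frequently_sequentially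
proof
  fix N
  have "\<forall>\<^sub>F j in sequentially. N \<le> nk j"
    using nk unfolding filterlim_at_top by blast
  then have "\<forall>\<^sub>F j in sequentially. N \<le> nk j \<and> dist (a (nk j)) l < e"
    using tendstoD[OF lim e] by (rule eventually_conj)
  then obtain j where "N \<le> nk j" "dist (a (nk j)) l < e"
    unfolding eventually_sequentially by blast
  then show "\<exists>n\<ge>N. dist (a n) l < e"
    by blast
qed

lemma semiflow_skew_product:
  fixes \<sigma> :: "real \<Rightarrow> 'y::metric_space \<Rightarrow> 'y"
  assumes S: "time_set S" and sys: "dyn_system S \<sigma>" and coc: "cocycle S W \<sigma> phi"
  shows "semiflow S (W \<times> UNIV) (skew_product \<sigma> phi)"
proof
  have \<sigma>_add: "\<And>t s y. t \<in> S \<Longrightarrow> s \<in> S \<Longrightarrow> \<sigma> (t + s) y = \<sigma> t (\<sigma> s y)"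
    and \<sigma>_cont: "continuous_on (S \<times> UNIV) (\<lambda>(t, y). \<sigma> t y)"
    using sys unfolding dyn_system_def by auto
  have phi_mem: "\<And>t u y. t \<in> nonneg_times S \<Longrightarrow> u \<in> W \<Longrightarrow> phi t u y \<in> W"
    and phi_cont: "continuous_on (nonneg_times S \<times> W \<times> UNIV) (\<lambda>(t, u, y). phi t u y)"
    and phi_add: "\<And>t s u y. t \<in> nonneg_times S \<Longrightarrow> s \<in> nonneg_times S \<Longrightarrow> u \<in> W \<Longrightarrow>
      phi (t + s) u y = phi t (phi s u y) (\<sigma> s y)"
    using coc unfolding cocycle_def by auto
  show "time_set S"
    by (rule S)
  show "skew_product \<sigma> phi t x \<in> W \<times> UNIV" if "t \<in> nonneg_times S" "x \<in> W \<times> UNIV" for t x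
    using phi_mem that unfolding skew_product_def by (auto simp: mem_Times_iff)
  show "skew_product \<sigma> phi (t + s) x = skew_product \<sigma> phi t (skew_product \<sigma> phi s x)"
    if "t \<in> nonneg_times S" "s \<in> nonneg_times S" "x \<in> W \<times> UNIV" for t s x
  proof -
    have "t \<in> S" "s \<in> S" "fst x \<in> W"
      using that by (auto simp: nonneg_times_def mem_Times_iff)
    then show ?thesis
      using phi_add[OF that(1,2)] \<sigma>_add unfolding skew_product_def by simp
  qed
  have "continuous_on (nonneg_times S \<times> W \<times> UNIV) (\<lambda>p. (fst p, snd (snd p)))"
    by (intro continuous_intros)
  moreover have "(\<lambda>p. (fst p, snd (snd p))) ` (nonneg_times S \<times> W \<times> UNIV) \<subseteq> S \<times> UNIV"
    by (auto simp: nonneg_times_def)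
  ultimately have "continuous_on (nonneg_times S \<times> W \<times> UNIV)
      (\<lambda>p. (\<lambda>(t, y). \<sigma> t y) (fst p, snd (snd p)))"
    by (rule continuous_on_compose2[OF \<sigma>_cont])
  with phi_cont have "continuous_on (nonneg_times S \<times> W \<times> UNIV)
      (\<lambda>p. ((\<lambda>(t, u, y). phi t u y) p, (\<lambda>(t, y). \<sigma> t y) (fst p, snd (snd p))))"
    by (rule continuous_on_Pair)
  then show "continuous_on (nonneg_times S \<times> W \<times> UNIV) (\<lambda>(t, x). skew_product \<sigma> phi t x)"
    by (simp add: skew_product_def case_prod_beta')
qed

lemma continuous_on_cocycle_at:
  assumes "cocycle S W \<sigma> phi" "t \<in> nonneg_times S"
  shows "continuous_on (W \<times> UNIV) (\<lambda>(u, y). phi t u y)"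
proof -
  have "continuous_on (nonneg_times S \<times> W \<times> UNIV) (\<lambda>(t, u, y). phi t u y)"
    using assms(1) unfolding cocycle_def by blast
  moreover have "continuous_on (W \<times> UNIV) (\<lambda>x. (t, x))"
    by (intro continuous_intros)
  moreover have "(\<lambda>x. (t, x)) ` (W \<times> UNIV) \<subseteq> nonneg_times S \<times> W \<times> UNIV"
    using assms(2) by auto
  ultimately have "continuous_on (W \<times> UNIV) (\<lambda>x. (\<lambda>(t, u, y). phi t u y) (t, x))"
    by (rule continuous_on_compose2)
  then show ?thesis
    by (simp add: case_prod_beta')
qed

lemma dyn_system_sampled_limit_fixed:
  assumes S: "time_set S" and sys: "dyn_system S \<sigma>" and tau: "tau \<in> nonneg_times S"
    and lim: "(\<lambda>k. \<sigma> (real k * tau) y) \<longlonglongrightarrow> q"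
  shows "\<sigma> tau q = q"
proof -
  have "continuous_on (S \<times> UNIV) (\<lambda>(t, y). \<sigma> t y)"
    using sys unfolding dyn_system_def by blast
  moreover have "continuous_on UNIV (\<lambda>y. (tau, y))"
    by (intro continuous_intros)
  moreover have "(\<lambda>y. (tau, y)) ` UNIV \<subseteq> S \<times> UNIV"
    using tau by (auto simp: nonneg_times_def)
  ultimately have "continuous_on UNIV (\<lambda>y. (\<lambda>(t, y). \<sigma> t y) (tau, y))"
    by (rule continuous_on_compose2)
  then have "continuous_on UNIV (\<sigma> tau)"
    by simp
  then have "(\<lambda>k. \<sigma> tau (\<sigma> (real k * tau) y)) \<longlonglongrightarrow> \<sigma> tau q"
    by (rule continuous_on_tendsto_compose[OF _ lim]) simp_all
  moreover have "\<sigma> (real (Suc k) * tau) y = \<sigma> tau (\<sigma> (real k * tau) y)" for k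
  proof -
    have "real (Suc k) * tau = tau + real k * tau"
      by (simp add: algebra_simps)
    moreover have "tau \<in> S" "real k * tau \<in> S"
      using tau of_nat_mult_nonneg_times[OF S tau, of k] by (auto simp: nonneg_times_def)
    ultimately show ?thesis
      using sys unfolding dyn_system_def by simp
  qed
  then have "(\<lambda>k. \<sigma> tau (\<sigma> (real k * tau) y)) \<longlonglongrightarrow> q"
    using LIMSEQ_Suc[OF lim] by simp
  ultimately show ?thesis
    using LIMSEQ_unique by blast
qed

lemma cocycle_sampled_cluster_point_fixed:
  fixes \<sigma> :: "real \<Rightarrow> 'y::metric_space \<Rightarrow> 'y"
  assumes S: "time_set S" and W: "is_interval W"
    and coc: "cocycle S W \<sigma> phi" and mono: "monotone_cocycle S W phi"
    and tau: "tau \<in> nonneg_times S" and u\<^sub>0: "u\<^sub>0 \<in> W"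
    and bounds: "lo \<in> W" "hi \<in> W" "\<And>n. lo \<le> phi (real n * tau) u\<^sub>0 y\<^sub>0"
      "\<And>n. phi (real n * tau) u\<^sub>0 y\<^sub>0 \<le> hi"
    and q: "(\<lambda>k. \<sigma> (real k * tau) y\<^sub>0) \<longlonglongrightarrow> q"
    and v: "v \<in> W"
    and cluster: "\<And>e. e > 0 \<Longrightarrow> \<exists>\<^sub>F n in sequentially. \<bar>phi (real n * tau) u\<^sub>0 y\<^sub>0 - v\<bar> < e"
  shows "phi tau v q = v"
proof -
  define g where "g n w = phi tau w (\<sigma> (real n * tau) y\<^sub>0)" for n w
  have u_W: "phi (real n * tau) u\<^sub>0 y\<^sub>0 \<in> W" for n
    using coc of_nat_mult_nonneg_times[OF S tau] u\<^sub>0 unfolding cocycle_def by blast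
  have rec: "phi (real (Suc n) * tau) u\<^sub>0 y\<^sub>0 = g n (phi (real n * tau) u\<^sub>0 y\<^sub>0)" for n
  proof -
    have "real (Suc n) * tau = tau + real n * tau"
      by (simp add: algebra_simps)
    then show ?thesis
      using coc tau of_nat_mult_nonneg_times[OF S tau, of n] u\<^sub>0
      unfolding g_def cocycle_def by simp
  qed
  have g_mono: "g n a \<le> g n b" if "a \<in> W" "b \<in> W" "a \<le> b" for n a b
    using mono tau that unfolding monotone_cocycle_def g_def by blast
  have phi_tau: "continuous_on (W \<times> UNIV) (\<lambda>(u, y). phi tau u y)"
    by (rule continuous_on_cocycle_at[OF coc tau])
  have g_lim: "(\<lambda>n. g n w) \<longlonglongrightarrow> phi tau w q" if "w \<in> W" for w
  proof -
    have "(\<lambda>n. (\<lambda>(u, y). phi tau u y) (w, \<sigma> (real n * tau) y\<^sub>0)) \<longlonglongrightarrow>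
        (\<lambda>(u, y). phi tau u y) (w, q)"
      using that by (intro continuous_on_tendsto_compose[OF phi_tau] tendsto_Pair tendsto_const q) auto
    then show ?thesis
      by (simp add: g_def)
  qed
  have "continuous_on W (\<lambda>w. phi tau w q)"
    by (rule continuous_on_compose2[OF phi_tau, of _ "\<lambda>w. (w, q)", simplified])
      (auto intro: continuous_intros)
  from monotone_recursion_cluster_point_fixed[OF W u_W bounds(1,3,2,4) rec g_mono g_lim this v cluster]
  show ?thesis
    by simp
qed

lemma skew_product_sampled_limit_fixed:
  fixes \<sigma> :: "real \<Rightarrow> 'y::metric_space \<Rightarrow> 'y"
  assumes S: "time_set S" and W: "is_interval W" and sys: "dyn_system S \<sigma>"
    and coc: "cocycle S W \<sigma> phi" and mono: "monotone_cocycle S W phi"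
    and tau: "tau \<in> nonneg_times S" and x0: "x0 \<in> W \<times> UNIV"
    and K: "compact K" "K \<subseteq> W \<times> UNIV"
    and orbit: "\<And>n. skew_product \<sigma> phi (real n * tau) x0 \<in> K"
    and q: "(\<lambda>k. \<sigma> (real k * tau) (snd x0)) \<longlonglongrightarrow> q"
    and nk: "filterlim nk sequentially sequentially"
    and x': "(\<lambda>j. skew_product \<sigma> phi (real (nk j) * tau) x0) \<longlonglongrightarrow> x'"
  shows "skew_product \<sigma> phi tau x' = x'"
proof -
  have x'_K: "x' \<in> K"
    using closed_sequentially[OF compact_imp_closed[OF K(1)] orbit x'] .
  have "(\<lambda>j. \<sigma> (real (nk j) * tau) (snd x0)) \<longlonglongrightarrow> snd x'"
    using tendsto_snd[OF x'] by (simp add: skew_product_def)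
  moreover have "(\<lambda>j. \<sigma> (real (nk j) * tau) (snd x0)) \<longlonglongrightarrow> q"
    using filterlim_compose[OF q nk] by simp
  ultimately have snd_x': "snd x' = q"
    using LIMSEQ_unique by blast
  have fst_K: "compact (fst ` K)" "fst ` K \<subseteq> W"
    using K(2) by (auto intro!: compact_continuous_image continuous_intros K(1))
  moreover have "fst ` K \<noteq> {}"
    using orbit by blast
  ultimately obtain lo hi where lo_hi: "lo \<in> W" "hi \<in> W" "\<And>w. w \<in> fst ` K \<Longrightarrow> lo \<le> w \<and> w \<le> hi"
    by (metis compact_attains_inf compact_attains_sup subsetD)
  have "phi (real n * tau) (fst x0) (snd x0) \<in> fst ` K" for n
    using orbit[of n] unfolding skew_product_def by force
  then have bounds: "lo \<le> phi (real n * tau) (fst x0) (snd x0)"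
    "phi (real n * tau) (fst x0) (snd x0) \<le> hi" for n
    using lo_hi(3) by blast+
  have "\<exists>\<^sub>F n in sequentially. \<bar>phi (real n * tau) (fst x0) (snd x0) - fst x'\<bar> < e"
    if "e > 0" for e
  proof -
    have "(\<lambda>j. phi (real (nk j) * tau) (fst x0) (snd x0)) \<longlonglongrightarrow> fst x'"
      using tendsto_fst[OF x'] by (simp add: skew_product_def)
    from frequently_dist_less_of_reindexed_limit[OF nk this that] show ?thesis
      by (simp only: dist_real_def)
  qed
  moreover have "fst x0 \<in> W" "fst x' \<in> W"
    using x0 x'_K K(2) by auto
  ultimately have "phi tau (fst x') q = fst x'"
    using cocycle_sampled_cluster_point_fixed[OF S W coc mono tau _ lo_hi(1,2) bounds q] by blast
  moreover have "\<sigma> tau q = q"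
    by (rule dyn_system_sampled_limit_fixed[OF S sys tau q])
  ultimately show ?thesis
    using snd_x' by (simp add: skew_product_def prod_eq_iff)
qed

theorem mainTheorem6:
  fixes S W :: "real set"
    and \<sigma> :: "real \<Rightarrow> 'y::complete_space \<Rightarrow> 'y"
    and phi :: "real \<Rightarrow> real \<Rightarrow> 'y \<Rightarrow> real"
    and tau :: real and x0 :: "real \<times> 'y"
  assumes S: "time_set S"
    and W: "is_interval W"
    and sys: "dyn_system S \<sigma>"
    and coc: "cocycle S W \<sigma> phi"
    and mono: "monotone_cocycle S W phi"
    and tau: "tau \<in> S" "tau > 0"
    and strict: "\<forall>k::nat. \<forall>y. \<forall>u1\<in>W. \<forall>u2\<in>W.
                   u1 < u2 \<longrightarrow> phi (real k * tau) u1 y < phi (real k * tau) u2 y"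
    and x0: "x0 \<in> W \<times> UNIV"
    and precomp: "precompact_in (W \<times> UNIV)
                    {skew_product \<sigma> phi t x0 | t. t \<in> nonneg_times S}"
    and asy: "asympt_periodic S \<sigma> tau (snd x0)"
  shows "omega_limit S (skew_product \<sigma> phi) x0 \<noteq> {}
       \<and> compact (omega_limit S (skew_product \<sigma> phi) x0)
       \<and> (\<forall>t\<in>nonneg_times S. skew_product \<sigma> phi t ` omega_limit S (skew_product \<sigma> phi) x0
                                = omega_limit S (skew_product \<sigma> phi) x0)
       \<and> snd ` omega_limit S (skew_product \<sigma> phi) x0 = omega_limit S \<sigma> (snd x0)
       \<and> (\<forall>q. (\<lambda>k::nat. \<sigma> (real k * tau) (snd x0)) \<longlonglongrightarrow> q \<longrightarrow>
            (let \<Omega> = omega_limit S (skew_product \<sigma> phi) x0 \<inter> {x. snd x = q}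
             in skew_product \<sigma> phi tau ` \<Omega> = \<Omega>
                \<and> (\<forall>x\<in>\<Omega>. skew_product \<sigma> phi tau x = x)))"
proof -
  interpret semiflow S "W \<times> UNIV" "skew_product \<sigma> phi"
    by (rule semiflow_skew_product[OF S sys coc])
  obtain K where K: "compact K" "K \<subseteq> W \<times> UNIV"
    and orbit: "\<And>t. t \<in> nonneg_times S \<Longrightarrow> skew_product \<sigma> phi t x0 \<in> K"
    using precomp unfolding precompact_in_def by blast
  have tau': "tau \<in> nonneg_times S"
    using tau by (simp add: nonneg_times_def)
  have periodic: "skew_product \<sigma> phi tau x = x"
    if "x \<in> omega_limit S (skew_product \<sigma> phi) x0"
      and q: "(\<lambda>k. \<sigma> (real k * tau) (snd x0)) \<longlonglongrightarrow> q" for x q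
    by (rule omega_limit_periodic[OF x0 K orbit tau' tau(2)
          skew_product_sampled_limit_fixed[OF S W sys coc mono tau' x0 K
            orbit[OF of_nat_mult_nonneg_times[OF S tau']] q] that(1)])
  have fibre: "let \<Omega> = omega_limit S (skew_product \<sigma> phi) x0 \<inter> {x. snd x = q}
      in skew_product \<sigma> phi tau ` \<Omega> = \<Omega> \<and> (\<forall>x\<in>\<Omega>. skew_product \<sigma> phi tau x = x)"
    if q: "(\<lambda>k. \<sigma> (real k * tau) (snd x0)) \<longlonglongrightarrow> q" for q
  proof -
    define \<Omega> where "\<Omega> = omega_limit S (skew_product \<sigma> phi) x0 \<inter> {x. snd x = q}"
    have fixed: "\<forall>x\<in>\<Omega>. skew_product \<sigma> phi tau x = x"
      unfolding \<Omega>_def using periodic[OF _ q] by blast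
    then have "skew_product \<sigma> phi tau ` \<Omega> = id ` \<Omega>"
      by (intro image_cong) simp_all
    with fixed show ?thesis
      unfolding \<Omega>_def[symmetric] Let_def by simp
  qed
  have "snd ` omega_limit S (skew_product \<sigma> phi) x0 = omega_limit S \<sigma> (snd x0)"
    by (rule image_omega_limit[where f = "skew_product \<sigma> phi" and x = x0, OF K(1) orbit])
      (auto intro: continuous_intros simp: skew_product_def)
  with omega_limit_nonempty[where f = "skew_product \<sigma> phi" and x = x0, OF S K(1) orbit]
    compact_omega_limit[where f = "skew_product \<sigma> phi" and x = x0, OF K(1) orbit]
    omega_limit_invariant[OF x0 K orbit] fibre
  show ?thesis
    by blast
qed

end
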